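(* Fix an integer $\theta\ge1$ and let $(U^\theta_n)_{n\ge0}$ be defined by $U^\theta_0=\dots=U^\theta_{\theta+1}=0$, $U^\theta_{\theta+2}=U^\theta_{\theta+3}=1$ and $$U^\theta_n=1+\frac{1}{n-\theta-1}\sum_{k=\theta}^{n-2}\left(U^\theta_k+U^\theta_{n-k-2}\right),\qquad n\ge\theta+2.$$ Then, as $n\to\infty$, $U^\theta_n\sim K_\theta\, n$ with $$K_\theta=e^{-1-H_{\theta+1}}\int_0^1 e^{t+\left(t+\frac{t^2}{2}+\dots+\frac{t^{\theta+1}}{\theta+1}\right)}\,dt,$$ where $H_{\theta+1}=1+\frac12+\dots+\frac{1}{\theta+1}$. In particular $K_1\approx 0.340633$, $K_2\approx0.285497$, $K_3\approx0.247908$.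
   Context: $U^\theta_n$ is the expected number of base pairs of a quasi-random saturated structure on $n$ positions, generated as follows: if the current interval has fewer than $\theta+2$ positions, stop; otherwise pair its first position with a position $u$ chosen uniformly among positions $\theta+2,\dots,m$ of the interval (where $m$ is its length), and recurse independently on the interval strictly between the two paired positions and on the interval strictly after $u$. *)

theory Defs
  imports "HOL-Analysis.Analysis" "HOL-Library.Landau_Symbols"
begin

text \<open>The sequence U^theta_n, given by U_n = 0 for n < theta + 2 and
  U_n = 1 + 1/(n - theta - 1) * sum_{k=theta}^{n-2} (U_k + U_{n-k-2}) for n >= theta + 2.
  (This reproduces U_{theta+2} = U_{theta+3} = 1.)\<close>

function U :: "nat \<Rightarrow> nat \<Rightarrow> real" where
  "U \<theta> n = (if n < \<theta> + 2 then 0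
     else 1 + (1 / (real n - real \<theta> - 1)) *
            (\<Sum>k = \<theta>..n - 2. U \<theta> k + U \<theta> (n - k - 2)))"
  by pat_completeness auto
termination
  by (relation "Wellfounded.measure snd") auto

definition K :: "nat \<Rightarrow> real" where
  "K \<theta> = exp (- 1 - harm (\<theta> + 1)) *
      integral {0..1} (\<lambda>t. exp (t + (\<Sum>j = 1..\<theta> + 1. t ^ j / real j)))"

end

theory Submission
  imports Defs
begin

(* Let dU and ddU be the first and second differences of U.  Subtracting
   consecutive instances of the defining recurrence twice eliminates the sums and yields
   the window recurrence
       (k + 1) ddU (k+th+2) = [k = 0] - ddU (k+th+1) - (sum over j <= th of ddU (k+th+1-j)),
   so ddU decays like B/2^i (indeed faster than any geometric sequence).  Hence both
   sum ddU and sum n ddU n converge, and since U is the double partial sum of ddU,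
   U n / n tends to sum ddU (general lemma double_partial_sums_over_n).
   To identify the limit, the generating function gfun x = sum_n ddU (n+th+1) x^n satisfies,
   by the window recurrence, the linear ODE gfun' = 1 - (1 + x + ... + x^th) gfun with
   gfun 0 = 0.  With weight t = exp (t + (t + t^2/2 + ... + t^(th+1)/(th+1))) we get
   (gfun * weight)' = weight, and integrating over [0,1] gives
   gfun 1 = exp (-1 - H_(th+1)) * integral of weight = K th.  Finally K th > 0 since
   weight >= 1 on [0,1], which turns the limit into the asymptotic equivalence.
   The argument works for every th. *)

declare U.simps[simp del]

lemma summable_shifted_powser_of_geometric_bound:
  fixes a :: "nat \<Rightarrow> real"
  assumes bound: "\<And>i. \<bar>a i\<bar> \<le> B / 2^i" and x: "\<bar>x\<bar> < 2"
  shows "summable (\<lambda>n. a (n+m) * x^n)"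
proof -
  have B0: "B \<ge> 0" using bound[of 0] by simp
  have "summable (\<lambda>n. B * (\<bar>x\<bar>/2)^n)"
    using x by (intro summable_mult summable_geometric) simp
  moreover have "norm (a (n+m) * x^n) \<le> B * (\<bar>x\<bar>/2)^n" for n
  proof -
    have "B / 2^(n+m) \<le> B / 2^n"
      using B0 by (intro divide_left_mono power_increasing) auto
    then have "\<bar>a (n+m)\<bar> * \<bar>x\<bar>^n \<le> (B/2^n) * \<bar>x\<bar>^n"
      using bound[of "n+m"] by (intro mult_right_mono) auto
    then show ?thesis by (simp add: abs_mult power_abs power_divide)
  qed
  ultimately show ?thesis by (rule summable_comparison_test'[where N=0])
qed

lemma double_partial_sums_eq:
  fixes a :: "nat \<Rightarrow> real"
  shows "(\<Sum>i\<le>n. \<Sum>j\<le>i. a j) = (real n + 1) * (\<Sum>j\<le>n. a j) - (\<Sum>j\<le>n. real j * a j)"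
  by (induction n) (simp_all add: algebra_simps)

lemma double_partial_sums_over_n:
  fixes a :: "nat \<Rightarrow> real"
  assumes "summable a" and "summable (\<lambda>n. real n * a n)"
  shows "(\<lambda>n. (\<Sum>i\<le>n. \<Sum>j\<le>i. a j) / real n) \<longlonglongrightarrow> suminf a"
proof -
  have "(\<lambda>n. (real (Suc n) / real n) * (\<Sum>j\<le>n. a j) - (\<Sum>j\<le>n. real j * a j) * (1 / real n))
      \<longlonglongrightarrow> 1 * suminf a - (\<Sum>j. real j * a j) * 0"
    by (intro tendsto_intros summable_LIMSEQ' assms LIMSEQ_Suc_n_over_n lim_inverse_n')
  moreover have "(\<Sum>i\<le>n. \<Sum>j\<le>i. a j) / real n
      = (real (Suc n) / real n) * (\<Sum>j\<le>n. a j) - (\<Sum>j\<le>n. real j * a j) * (1 / real n)" for n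
    unfolding double_partial_sums_eq by (simp add: diff_divide_distrib add.commute)
  ultimately show ?thesis by simp
qed

lemma has_real_derivative_log_partial_sum:
  "((\<lambda>x. \<Sum>j = 1..m. x ^ j / real j) has_real_derivative (\<Sum>j<m. x^j)) (at x)"
proof -
  have "((\<lambda>x. \<Sum>j = 1..m. x ^ j / real j) has_real_derivative (\<Sum>j = 1..m. x^(j-1))) (at x)"
  proof (rule DERIV_sum)
    fix j assume j: "j \<in> {1..m}"
    have "((\<lambda>x. x ^ j / real j) has_real_derivative (real j * x^(j - Suc 0)) / real j) (at x)"
      by (intro DERIV_cdivide DERIV_pow)
    then show "((\<lambda>x. x ^ j / real j) has_real_derivative x^(j-1)) (at x)" using j by simp
  qed
  moreover have "(\<Sum>j = 1..m. x^(j-1)) = (\<Sum>j<m. x^j)"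
    by (simp only: One_nat_def sum.atLeast1_atMost_eq) simp
  ultimately show ?thesis by simp
qed

context fixes \<theta> :: nat
begin

lemma U_small: "n < \<theta> + 2 \<Longrightarrow> U \<theta> n = 0"
  by (subst U.simps) simp

lemma U_big: "\<theta> + 2 \<le> n \<Longrightarrow> U \<theta> n = 1 + (1 / (real n - real \<theta> - 1)) *
            (\<Sum>k = \<theta>..n - 2. U \<theta> k + U \<theta> (n - k - 2))"
  by (subst U.simps) simp

text \<open>Prefix sums of U; both halves of the sum in the recurrence are prefix sums.\<close>

definition prefix_U :: "nat \<Rightarrow> real" where "prefix_U N = (\<Sum>k<N. U \<theta> k)"

lemma prefix_U_Suc: "prefix_U (Suc N) = prefix_U N + U \<theta> N"
  unfolding prefix_U_def by simp

lemma sum_U_eq_prefix: "\<theta> + 2 \<le> n \<Longrightarrow> (\<Sum>k=\<theta>..n-2. U \<theta> k) = prefix_U (n-1)"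
  unfolding prefix_U_def by (rule sym, rule sum.mono_neutral_right) (auto simp: U_small)

lemma sum_U_reflected_eq_prefix:
  assumes "\<theta> + 2 \<le> n" shows "(\<Sum>k=\<theta>..n-2. U \<theta> (n-k-2)) = prefix_U (n-\<theta>-1)"
proof -
  have "(\<Sum>k=\<theta>..n-2. U \<theta> (n-k-2)) = (\<Sum>j=0..n-2-\<theta>. U \<theta> j)"
    by (rule sum.reindex_bij_witness[of _ "\<lambda>j. n-2-j" "\<lambda>k. n-2-k"]) (use assms in auto)
  also have "{0..n-2-\<theta>} = {..<n-\<theta>-1}" using assms by auto
  finally show ?thesis unfolding prefix_U_def .
qed

lemma U_rec_prefix: assumes "\<theta> + 1 \<le> n"
  shows "(real n - real \<theta> - 1) * (U \<theta> n - 1) = prefix_U (n-1) + prefix_U (n-\<theta>-1)"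
proof (cases "n = \<theta> + 1")
  case True
  have "prefix_U \<theta> = 0" "prefix_U 0 = 0" unfolding prefix_U_def by (auto simp: U_small)
  then show ?thesis using True by simp
next
  case False
  then have n: "\<theta> + 2 \<le> n" using assms by simp
  have "(real n - real \<theta> - 1) * (U \<theta> n - 1) = (\<Sum>k = \<theta>..n - 2. U \<theta> k + U \<theta> (n - k - 2))"
    using n by (subst U_big[OF n]) (simp add: field_simps)
  also have "\<dots> = prefix_U (n-1) + prefix_U (n-\<theta>-1)"
    by (simp only: sum.distrib sum_U_eq_prefix[OF n] sum_U_reflected_eq_prefix[OF n])
  finally show ?thesis .
qed

text \<open>First and second differences of U (with U (-1) read as U 0).\<close>

definition dU :: "nat \<Rightarrow> real" where "dU n = U \<theta> n - U \<theta> (n-1)"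
definition ddU :: "nat \<Rightarrow> real" where "ddU n = dU n - dU (n-1)"

lemma dU_small: "n \<le> \<theta> + 1 \<Longrightarrow> dU n = 0"
  unfolding dU_def by (simp add: U_small)

lemma ddU_small: "n \<le> \<theta> + 1 \<Longrightarrow> ddU n = 0"
  unfolding ddU_def by (simp add: dU_small)

lemma U_first: "U \<theta> (\<theta>+2) = 1"
  using U_big[of "\<theta>+2"] U_small[of \<theta>] U_small[of 0] by simp

lemma ddU_first: "ddU (\<theta>+2) = 1"
  unfolding ddU_def dU_def using U_first by (simp add: U_small)

lemma U_double_sum_ddU: "U \<theta> n = (\<Sum>i\<le>n. \<Sum>j\<le>i. ddU j)"
proof -
  have "dU i = (\<Sum>j\<le>i. ddU j)" for i
    by (induction i) (auto simp: ddU_def dU_small)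
  moreover have "U \<theta> n = (\<Sum>i\<le>n. dU i)"
    by (induction n) (auto simp: dU_def U_small)
  ultimately show ?thesis by simp
qed

lemma dU_rec: assumes "\<theta> + 1 \<le> n"
  shows "(real n - real \<theta>) * dU (n+1) + dU n = 1 + U \<theta> (n-\<theta>-1)"
proof -
  have a: "(real (n+1) - real \<theta> - 1) * (U \<theta> (n+1) - 1) = prefix_U n + prefix_U (n-\<theta>)"
    using U_rec_prefix[of "n+1"] assms by (simp add: Suc_diff_le)
  have b: "(real n - real \<theta> - 1) * (U \<theta> n - 1) = prefix_U (n-1) + prefix_U (n-\<theta>-1)"
    using U_rec_prefix assms by simp
  have "prefix_U n = prefix_U (n-1) + U \<theta> (n-1)"
    using assms prefix_U_Suc[of "n-1"] by (simp add: Suc_diff_le)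
  moreover have "prefix_U (n-\<theta>) = prefix_U (n-\<theta>-1) + U \<theta> (n-\<theta>-1)"
    using assms prefix_U_Suc[of "n-\<theta>-1"] by (simp add: Suc_diff_Suc)
  ultimately show ?thesis using a b unfolding dU_def by (simp add: algebra_simps)
qed

lemma dU_telescope: "dU (k+m) - dU k = (\<Sum>j<m. ddU (k+m-j))"
proof (induction m)
  case (Suc m)
  have "(\<Sum>j<Suc m. ddU (k + Suc m - j)) = ddU (k + Suc m) + (\<Sum>j<m. ddU (k+m-j))"
    by (subst sum.lessThan_Suc_shift) simp
  then show ?case using Suc unfolding ddU_def by simp
qed simp

lemma ddU_rec:
  "(real k + 1) * ddU (k+\<theta>+2) = (if k = 0 then 1 else 0) - ddU (k+\<theta>+1) - (\<Sum>j<\<theta>+1. ddU (k+\<theta>+1-j))"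
proof (cases "k = 0")
  case True
  have "(\<Sum>j<\<theta>+1. ddU (\<theta>+1-j)) = 0" by (intro sum.neutral) (auto simp: ddU_small)
  then show ?thesis using True ddU_first ddU_small[of "\<theta>+1"] by (simp add: add.commute)
next
  case False
  have "(real (k+\<theta>+1) - real \<theta>) * dU (k+\<theta>+2) + dU (k+\<theta>+1) = 1 + U \<theta> k"
    using dU_rec[of "k+\<theta>+1"] by (simp add: add.commute)
  moreover have "(real (k+\<theta>) - real \<theta>) * dU (k+\<theta>+1) + dU (k+\<theta>) = 1 + U \<theta> (k-1)"
    using dU_rec[of "k+\<theta>"] False by simp
  moreover have "dU (k+(\<theta>+1)) - dU k = (\<Sum>j<\<theta>+1. ddU (k+(\<theta>+1)-j))" by (rule dU_telescope)
  moreover have "U \<theta> k - U \<theta> (k-1) = dU k" unfolding dU_def ..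
  ultimately show ?thesis using False unfolding ddU_def
    by (simp add: algebra_simps numeral_2_eq_2)
qed

lemma ddU_step_bound:
  assumes "k \<ge> 1" and prev: "\<And>j. j \<le> \<theta> \<Longrightarrow> \<bar>ddU (k+\<theta>+1-j)\<bar> \<le> M"
  shows "(real k + 1) * \<bar>ddU (k+\<theta>+2)\<bar> \<le> real (\<theta>+2) * M"
proof -
  have "(real k + 1) * \<bar>ddU (k+\<theta>+2)\<bar> = \<bar>(real k + 1) * ddU (k+\<theta>+2)\<bar>"
    by (simp add: abs_mult)
  also have "\<dots> = \<bar>ddU (k+\<theta>+1) + (\<Sum>j<\<theta>+1. ddU (k+\<theta>+1-j))\<bar>"
    unfolding ddU_rec using assms(1) by (simp add: abs_minus_commute)
  also have "\<dots> \<le> \<bar>ddU (k+\<theta>+1)\<bar> + (\<Sum>j<\<theta>+1. \<bar>ddU (k+\<theta>+1-j)\<bar>)"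
    by (intro order.trans[OF abs_triangle_ineq] add_left_mono sum_abs)
  also have "\<dots> \<le> M + (\<Sum>j<\<theta>+1. M)"
    using prev[of 0] by (intro add_mono sum_mono prev) auto
  finally show ?thesis by (simp add: algebra_simps)
qed

text \<open>Hence ddU decays geometrically with ratio 1/2: once k + 1 exceeds (th+2) 2^(th+1),
  the factor 1/(k+1) beats the loss 2^(th+1) from looking th+1 steps back.\<close>

lemma ddU_geometric_bound: obtains B where "\<And>i. \<bar>ddU i\<bar> \<le> B / 2^i"
proof -
  define N where "N = \<theta>+2+(\<theta>+2)*2^(\<theta>+1)"
  define B where "B = (\<Sum>i\<le>N. \<bar>ddU i\<bar> * 2^i)"
  have B0: "B \<ge> 0" unfolding B_def by (intro sum_nonneg) auto
  have "\<bar>ddU i\<bar> \<le> B/2^i" for i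
  proof (induction i rule: less_induct)
    case (less i)
    show ?case
    proof (cases "i \<le> N")
      case True
      then have "\<bar>ddU i\<bar> * 2^i \<le> B" unfolding B_def by (intro member_le_sum) auto
      then show ?thesis by (simp add: field_simps)
    next
      case False
      define k where "k = i - \<theta> - 2"
      have ik: "i = k + \<theta> + 2" and k1: "k \<ge> 1"
        and kb: "(\<theta>+2)*2^(\<theta>+1) \<le> k + 1"
        using False unfolding N_def k_def by (simp_all add: not_le)
      define M where "M = B * 2^(\<theta>+1) / 2^i"
      have prev_bound: "\<bar>ddU (k+\<theta>+1-j)\<bar> \<le> M" if "j \<le> \<theta>" for j
      proof -
        have "\<bar>ddU (k+\<theta>+1-j)\<bar> \<le> B / 2^(k+\<theta>+1-j)" using less.IH[of "k+\<theta>+1-j"] ik by auto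
        also have "\<dots> \<le> B / 2^(k+1)"
          using B0 that by (intro divide_left_mono power_increasing) auto
        also have "B / 2^(k+1) = M" unfolding M_def ik by (simp add: power_add field_simps)
        finally show ?thesis .
      qed
      have "(real k + 1) * \<bar>ddU i\<bar> \<le> real (\<theta>+2) * M"
        using ddU_step_bound[OF k1 prev_bound] ik by simp
      also have "\<dots> = (real (\<theta>+2) * 2^(\<theta>+1)) * (B/2^i)" unfolding M_def by simp
      also have "\<dots> \<le> (real k + 1) * (B/2^i)"
      proof (rule mult_right_mono)
        show "real (\<theta>+2) * 2^(\<theta>+1) \<le> real k + 1"
          using of_nat_mono[OF kb, where 'a=real] by (simp add: algebra_simps)
      qed (use B0 in simp)
      finally have "(real k + 1) * \<bar>ddU i\<bar> \<le> (real k + 1) * (B/2^i)" .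
      then show ?thesis by (rule mult_left_le_imp_le) simp
    qed
  qed
  then show ?thesis by (rule that)
qed

lemma ddU_powser_summable: "\<bar>x\<bar> < 2 \<Longrightarrow> summable (\<lambda>n. ddU (n+m) * x^n)"
  by (rule ddU_geometric_bound, rule summable_shifted_powser_of_geometric_bound)

lemma U_over_n: "(\<lambda>n. U \<theta> n / real n) \<longlonglongrightarrow> suminf ddU"
proof -
  have "summable ddU" using ddU_powser_summable[of 1 0] by simp
  moreover have "summable (\<lambda>n. diffs ddU n * 1^n)"
    by (rule termdiff_converges[where K=2]) (use ddU_powser_summable[of _ 0] in auto)
  then have "summable (\<lambda>n. real n * ddU n)"
    by (subst summable_Suc_iff[symmetric]) (simp add: diffs_def)
  ultimately show ?thesis
    unfolding U_double_sum_ddU by (rule double_partial_sums_over_n)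
qed

definition gfun :: "real \<Rightarrow> real" where "gfun x = (\<Sum>n. ddU (n+\<theta>+1) * x^n)"

lemma gfun_sums: "\<bar>x\<bar> < 2 \<Longrightarrow> (\<lambda>n. ddU (n+\<theta>+1) * x^n) sums gfun x"
  unfolding gfun_def using ddU_powser_summable[of x "\<theta>+1"]
  by (intro summable_sums) (simp add: add.assoc)

lemma suminf_ddU_eq_gfun: "suminf ddU = gfun 1"
proof -
  have "suminf ddU = (\<Sum>n. ddU (n + (\<theta>+1))) + (\<Sum>i<\<theta>+1. ddU i)"
    using ddU_powser_summable[of 1 0] by (intro suminf_split_initial_segment) simp
  moreover have "(\<Sum>i<\<theta>+1. ddU i) = 0" by (intro sum.neutral) (auto simp: ddU_small)
  ultimately show ?thesis unfolding gfun_def by (simp add: add.assoc)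
qed

lemma gfun_zero: "gfun 0 = 0"
  unfolding gfun_def using powser_zero[of "\<lambda>n. ddU (n+\<theta>+1)"] by (simp add: ddU_small)

text \<open>Multiplying by x^j shifts the coefficients; the vanishing initial values of ddU make
  this exact.\<close>

lemma gfun_shift_sums:
  assumes "\<bar>x\<bar> < 2" and "j \<le> \<theta>"
  shows "(\<lambda>n. ddU (n+\<theta>+1-j) * x^n) sums (x^j * gfun x)"
proof -
  define f where "f n = ddU (n+\<theta>+1-j) * x^n" for n
  have "(\<lambda>i. f (i+j)) = (\<lambda>i. x^j * (ddU (i+\<theta>+1) * x^i))"
    using assms(2) by (auto simp: f_def power_add algebra_simps)
  then have "(\<lambda>i. f (i+j)) sums (x^j * gfun x)"
    using sums_mult[OF gfun_sums[OF assms(1)]] by simp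
  then have "f sums (x^j * gfun x + (\<Sum>i<j. f i))" by (simp only: sums_iff_shift)
  moreover have "(\<Sum>i<j. f i) = 0"
    unfolding f_def using assms(2) by (intro sum.neutral) (auto simp: ddU_small)
  ultimately show ?thesis unfolding f_def by simp
qed

lemma gfun_deriv:
  assumes "\<bar>x\<bar> < 2"
  shows "(gfun has_real_derivative 1 - gfun x - (\<Sum>j<\<theta>+1. x^j) * gfun x) (at x)"
proof -
  let ?a = "\<lambda>n. ddU (n+\<theta>+1)"
  have deriv: "(gfun has_real_derivative (\<Sum>n. diffs ?a n * x^n)) (at x)"
    unfolding gfun_def[abs_def] using assms ddU_powser_summable[of _ "\<theta>+1"]
    by (intro termdiffs_strong'[where K=2]) (auto simp: add.assoc)
  have coeffs: "diffs ?a n * x^n = (if n = 0 then 1 else 0)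
      - ?a n * x^n - (\<Sum>j<\<theta>+1. ddU (n+\<theta>+1-j) * x^n)" for n
  proof -
    have "diffs ?a n = (real n + 1) * ddU (n+\<theta>+2)" by (simp add: diffs_def)
    then show ?thesis unfolding ddU_rec
      by (simp only: left_diff_distrib sum_distrib_right) simp
  qed
  have "(\<lambda>n. \<Sum>j<\<theta>+1. ddU (n+\<theta>+1-j) * x^n) sums (\<Sum>j<\<theta>+1. x^j * gfun x)"
    by (intro sums_sum gfun_shift_sums[OF assms]) simp
  then have "(\<lambda>n. (if n = 0 then 1 else 0) - ?a n * x^n - (\<Sum>j<\<theta>+1. ddU (n+\<theta>+1-j) * x^n))
      sums (1 - gfun x - (\<Sum>j<\<theta>+1. x^j * gfun x))"
    using sums_single[of 0 "\<lambda>_. 1::real"] gfun_sums[OF assms] by (intro sums_diff) simp_all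
  then have "(\<lambda>n. diffs ?a n * x^n) sums (1 - gfun x - (\<Sum>j<\<theta>+1. x^j * gfun x))"
    by (simp only: coeffs)
  with deriv show ?thesis by (simp add: sums_unique[symmetric] flip: sum_distrib_right)
qed

text \<open>The integrating factor of that ODE.\<close>

definition weight :: "real \<Rightarrow> real" where
  "weight t = exp (t + (\<Sum>j = 1..\<theta> + 1. t ^ j / real j))"

lemma gfun_weight_deriv:
  assumes "\<bar>x\<bar> < 2" shows "((\<lambda>x. gfun x * weight x) has_real_derivative weight x) (at x)"
proof -
  have "(weight has_real_derivative weight x * (1 + (\<Sum>j<\<theta>+1. x^j))) (at x)"
    unfolding weight_def[abs_def]
    by (intro DERIV_chain2[OF DERIV_exp] DERIV_add DERIV_ident has_real_derivative_log_partial_sum)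
  from DERIV_mult[OF gfun_deriv[OF assms] this] show ?thesis
    by (simp add: algebra_simps)
qed

lemma weight_has_integral: "(weight has_integral (gfun 1 * weight 1)) {0..1}"
proof -
  have "(weight has_integral (gfun 1 * weight 1 - gfun 0 * weight 0)) {0..1}"
  proof (rule fundamental_theorem_of_calculus)
    fix x :: real assume "x \<in> {0..1}"
    then have "\<bar>x\<bar> < 2" by auto
    then show "((\<lambda>x. gfun x * weight x) has_vector_derivative weight x) (at x within {0..1})"
      using gfun_weight_deriv has_real_derivative_iff_has_vector_derivative
        has_field_derivative_at_within by blast
  qed simp
  then show ?thesis by (simp add: gfun_zero)
qed

lemma K_eq_gfun: "K \<theta> = gfun 1"
proof -
  have "weight 1 = exp (1 + harm (\<theta>+1))"
    unfolding weight_def harm_def by (simp add: inverse_eq_divide)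
  then have "integral {0..1} weight = gfun 1 * exp (1 + harm (\<theta>+1))"
    using integral_unique[OF weight_has_integral] by simp
  then show ?thesis
    unfolding K_def weight_def[symmetric] by (simp flip: exp_add)
qed

text \<open>The limit is nonzero: weight \<ge> 1 on [0,1] forces gfun 1 * weight 1 \<ge> 1.\<close>

lemma K_pos: "K \<theta> > 0"
proof -
  have "1 \<le> gfun 1 * weight 1"
  proof (rule has_integral_le[OF _ weight_has_integral])
    show "((\<lambda>x::real. 1::real) has_integral 1) {0..1}"
      using has_integral_const_real[of "1::real" 0 1] by simp
    fix x :: real assume "x \<in> {0..1}"
    then have "0 \<le> x" and "0 \<le> (\<Sum>j = 1..\<theta> + 1. x ^ j / real j)"
      by (simp_all add: sum_nonneg)
    then show "1 \<le> weight x" unfolding weight_def by simp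
  qed
  moreover have "weight 1 > 0" unfolding weight_def by simp
  ultimately show ?thesis
    unfolding K_eq_gfun by (meson zero_less_mult_pos2 zero_less_one order_less_le_trans)
qed

end

theorem mainTheorem10:
  fixes \<theta> :: nat
  assumes "\<theta> \<ge> 1"
  shows "(\<lambda>n. U \<theta> n) \<sim>[at_top] (\<lambda>n. K \<theta> * real n)"
proof (rule asymp_equivI'_const)
  show "(\<lambda>n. U \<theta> n / real n) \<longlonglongrightarrow> K \<theta>"
    using U_over_n[of \<theta>] by (simp add: suminf_ddU_eq_gfun K_eq_gfun)
  show "K \<theta> \<noteq> 0" using K_pos[of \<theta>] by simp
qed

end
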